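(* Let $N$ be a numerical monoid and let $r\in\mathbb{Q}_{>1}\setminus\mathbb{N}$ be such that $S_{r,N}$ is atomic. Let $x$ be a nonzero element of $S_{r,N}$ and let $z=\sum_{i=0}^{n}c_i r^{s_i}\in\mathsf{Z}(x)$ with $c_0,\dots,c_n\in\mathbb{N}$. Then: (1) $|z|=\min\mathsf{L}(x)$ if and only if $c_i<\mathsf{n}(r)^{\delta_i}$ for every $i\in\{0,\dots,n\}$; (2) there is exactly one factorization of $x$ of minimum length; (3) $|z|=\max\mathsf{L}(x)$ if and only if $c_i<\mathsf{d}(r)^{\delta_{i-1}}$ for every $i\in\{1,\dots,n\}$; (4) there is exactly one factorization of $x$ of maximum length; (5) if $c_i<\mathsf{d}(r)$ for every $i\in\{0,\dots,n\}$, then $|\mathsf{Z}(x)|=1$.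
   Context: $\mathbb{N}=\{0,1,2,\dots\}$. A numerical monoid $N$ is an additive submonoid of $\mathbb{N}$ with finite complement in $\mathbb{N}$. For $r\in\mathbb{Q}_{>0}$ write $r=\mathsf{n}(r)/\mathsf{d}(r)$ with $\mathsf{n}(r),\mathsf{d}(r)$ coprime positive integers. The exponential Puiseux semiring $S_{r,N}$ is the additive submonoid of $\mathbb{Q}_{\ge 0}$ generated by $\{r^k: k\in N\}$. Let $s_0<s_1<s_2<\cdots$ be the elements of $N$ in increasing order (so $s_0=0$) and $\delta_n=s_{n+1}-s_n$. When $\mathsf{n}(r)>1$ and $\mathsf{d}(r)>1$, $S_{r,N}$ is atomic with set of atoms $\{r^{s}: s\in N\}$. For an atomic monoid $M$ (written additively), $\mathsf{Z}(M)$ is the free commutative monoid on the set of atoms, $\pi:\mathsf{Z}(M)\to M$ the homomorphism sending each atom to itself, $\mathsf{Z}(x)=\pi^{-1}(x)$ the set of factorizations of $x$, $|z|$ the number of atoms (with multiplicity) in $z$, and $\mathsf{L}(x)=\{|z|: z\in\mathsf{Z}(x)\}$ the set of lengths of $x$. A factorization $\sum c_i r^{s_i}$ means the formal sum with $c_i$ copies of the atom $r^{s_i}$. *)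

theory Defs
  imports Complex_Main "HOL-Library.Multiset" "HOL-Library.Infinite_Set"
begin

definition numerical_monoid :: "nat set \<Rightarrow> bool" where
  "numerical_monoid N \<longleftrightarrow> 0 \<in> N \<and> (\<forall>a\<in>N. \<forall>b\<in>N. a + b \<in> N) \<and> finite (UNIV - N)"

definition numer :: "rat \<Rightarrow> int" where "numer q = fst (quotient_of q)"
definition denom :: "rat \<Rightarrow> int" where "denom q = snd (quotient_of q)"

inductive_set puiseux :: "rat \<Rightarrow> nat set \<Rightarrow> rat set" for r N where
  zero: "0 \<in> puiseux r N"
| step: "x \<in> puiseux r N \<Longrightarrow> k \<in> N \<Longrightarrow> x + r ^ k \<in> puiseux r N"

definition atoms :: "rat set \<Rightarrow> rat set" where
  "atoms M = {a \<in> M. a \<noteq> 0 \<and> (\<forall>b\<in>M. \<forall>c\<in>M. a = b + c \<longrightarrow> b = 0 \<or> c = 0)}"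

definition atomic :: "rat set \<Rightarrow> bool" where
  "atomic M \<longleftrightarrow> (\<forall>x\<in>M. x \<noteq> 0 \<longrightarrow> (\<exists>z. set_mset z \<subseteq> atoms M \<and> sum_mset z = x))"

definition factorizations :: "rat set \<Rightarrow> rat \<Rightarrow> rat multiset set" where
  "factorizations M x = {z. set_mset z \<subseteq> atoms M \<and> sum_mset z = x}"

definition lengths :: "rat set \<Rightarrow> rat \<Rightarrow> nat set" where
  "lengths M x = size ` factorizations M x"

(* s_i: i-th element of N in increasing order; delta_i = s_{i+1} - s_i *)
definition elem :: "nat set \<Rightarrow> nat \<Rightarrow> nat" where
  "elem N i = enumerate N i"

definition gap :: "nat set \<Rightarrow> nat \<Rightarrow> nat" where
  "gap N i = elem N (Suc i) - elem N i"

definition fact_of :: "rat \<Rightarrow> nat set \<Rightarrow> nat \<Rightarrow> (nat \<Rightarrow> nat) \<Rightarrow> rat multiset" where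
  "fact_of r N n c = (\<Sum>i\<le>n. replicate_mset (c i) (r ^ elem N i))"

end

theory Submission
  imports Defs
begin

(* Write r = p/q in lowest terms, so that p > q >= 2. The atoms of S_{r,N} are exactly the
   powers r^{s_i}, so a factorization is a coefficient vector (c_i). Two factorizations of the
   same element differ by an integer vector e with sum_i e_i r^{s_i} = 0; after clearing
   denominators, the lowest nonzero e_i is divisible by p^{delta_i} and the highest one by
   q^{delta_{i-1}}. Hence at most one factorization of x satisfies c_i < p^{delta_i} for all i,
   and at most one satisfies c_i < q^{delta_{i-1}} for all i >= 1. A factorization violating
   the first (second) bound is shortened (lengthened) by the exchange
   p^{delta_i} r^{s_i} = q^{delta_i} r^{s_{i+1}}, so the two bounds characterise the unique
   factorizations of minimal and maximal length. If all c_i < q, then z satisfies both bounds,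
   so every factorization has the length of z and therefore equals z. *)

lemma dvd_summand_if_sum_eq_0:
  fixes f :: "'a \<Rightarrow> 'b::comm_ring_1"
  assumes "finite A" "i \<in> A" "sum f A = 0" "\<And>j. j \<in> A - {i} \<Longrightarrow> a dvd f j"
  shows "a dvd f i"
proof -
  have "f i = - sum f (A - {i})"
    using assms(1-3) by (simp add: sum.remove eq_neg_iff_add_eq_0)
  also have "a dvd \<dots>"
    using assms(4) by (auto intro: dvd_sum)
  finally show ?thesis .
qed

lemma zero_if_dvd_abs_less:
  fixes a b :: int
  assumes "a dvd b" "\<bar>b\<bar> < a"
  shows "b = 0"
proof (rule ccontr)
  assume "b \<noteq> 0"
  then have "\<bar>a\<bar> \<le> \<bar>b\<bar>" using assms(1) dvd_imp_le_int by blast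
  then show False using assms(2) by linarith
qed

lemma power_comb_clear_denominators:
  fixes r :: rat and p q :: int and s :: "nat \<Rightarrow> nat" and e :: "nat \<Rightarrow> int"
  assumes r: "r = of_int p / of_int q" and "q \<noteq> 0" and "mono s"
    and "(\<Sum>j\<le>M. of_int (e j) * r ^ s j) = 0"
  shows "(\<Sum>j\<le>M. e j * p ^ s j * q ^ (s M - s j)) = 0"
proof -
  have power_r: "r ^ k * of_int q ^ k = of_int p ^ k" for k
    using \<open>q \<noteq> 0\<close> by (simp add: r power_divide)
  have summand: "of_int (e j * p ^ s j * q ^ (s M - s j)) = of_int (e j) * r ^ s j * of_int q ^ s M"
    if "j \<le> M" for j
  proof -
    have "s j \<le> s M" using \<open>mono s\<close> that by (simp add: monoD)
    have "of_int (e j * p ^ s j * q ^ (s M - s j))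
        = of_int (e j) * r ^ s j * (of_int q ^ s j * of_int q ^ (s M - s j))"
      by (simp only: of_int_mult of_int_power flip: power_r)
    also have "\<dots> = of_int (e j) * r ^ s j * of_int q ^ s M"
      using \<open>s j \<le> s M\<close> by (metis le_add_diff_inverse power_add)
    finally show ?thesis .
  qed
  have "(of_int (\<Sum>j\<le>M. e j * p ^ s j * q ^ (s M - s j)) :: rat)
      = (\<Sum>j\<le>M. of_int (e j) * r ^ s j) * of_int q ^ s M"
    unfolding of_int_sum sum_distrib_right by (rule sum.cong[OF refl], rule summand, simp)
  also have "\<dots> = 0" using assms(4) by simp
  finally show ?thesis by (simp only: of_int_eq_0_iff)
qed

lemma power_comb_eq_0_lowest_coeff_dvd:
  fixes r :: rat and p q :: int and s :: "nat \<Rightarrow> nat" and e :: "nat \<Rightarrow> int"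
  assumes r: "r = of_int p / of_int q" and "p \<noteq> 0" "q \<noteq> 0" "coprime p q" "mono s"
    and "i \<le> M" and below: "\<And>j. j < i \<Longrightarrow> e j = 0"
    and "(\<Sum>j\<le>M. of_int (e j) * r ^ s j) = 0"
  shows "p ^ (s (Suc i) - s i) dvd e i"
proof -
  define g where "g = s (Suc i) - s i"
  define t where "t j = e j * p ^ s j * q ^ (s M - s j)" for j
  have "p ^ s i * p ^ g dvd t i"
  proof (rule dvd_summand_if_sum_eq_0[where A = "{..M}" and f = t])
    show "sum t {..M} = 0"
      unfolding t_def using power_comb_clear_denominators[OF r \<open>q \<noteq> 0\<close> \<open>mono s\<close>] assms(8) .
  next
    fix j assume j: "j \<in> {..M} - {i}"
    show "p ^ s i * p ^ g dvd t j"
    proof (cases "j < i")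
      case False
      with j have "s (Suc i) \<le> s j" using \<open>mono s\<close> by (simp add: monoD)
      moreover have "s i \<le> s (Suc i)" using \<open>mono s\<close> by (simp add: monoD)
      ultimately have "s j = s i + g + (s j - s (Suc i))" unfolding g_def by simp
      then have "p ^ s j = p ^ s i * p ^ g * p ^ (s j - s (Suc i))" by (metis power_add)
      then show ?thesis by (simp add: t_def)
    qed (simp add: below t_def)
  qed (use \<open>i \<le> M\<close> in auto)
  then have "p ^ s i * p ^ g dvd p ^ s i * (e i * q ^ (s M - s i))"
    by (simp add: t_def mult_ac)
  then have "p ^ g dvd e i * q ^ (s M - s i)"
    using \<open>p \<noteq> 0\<close> by simp
  moreover have "coprime (p ^ g) (q ^ (s M - s i))" using \<open>coprime p q\<close> by simp
  ultimately show ?thesis unfolding g_def using coprime_dvd_mult_left_iff by blast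
qed

lemma power_comb_eq_0_top_coeff_dvd:
  fixes r :: rat and p q :: int and s :: "nat \<Rightarrow> nat" and e :: "nat \<Rightarrow> int"
  assumes r: "r = of_int p / of_int q" and "q \<noteq> 0" "coprime p q" "mono s"
    and "(\<Sum>j\<le>Suc M. of_int (e j) * r ^ s j) = 0"
  shows "q ^ (s (Suc M) - s M) dvd e (Suc M)"
proof -
  define g where "g = s (Suc M) - s M"
  define t where "t j = e j * p ^ s j * q ^ (s (Suc M) - s j)" for j
  have "q ^ g dvd t (Suc M)"
  proof (rule dvd_summand_if_sum_eq_0[where A = "{..Suc M}" and f = t])
    show "sum t {..Suc M} = 0"
      unfolding t_def using power_comb_clear_denominators[OF r \<open>q \<noteq> 0\<close> \<open>mono s\<close>] assms(5) .
  next
    fix j assume "j \<in> {..Suc M} - {Suc M}"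
    then have "s j \<le> s M" using \<open>mono s\<close> by (simp add: monoD)
    moreover have "s M \<le> s (Suc M)" using \<open>mono s\<close> by (simp add: monoD)
    ultimately have "s (Suc M) - s j = g + (s M - s j)" unfolding g_def by simp
    then show "q ^ g dvd t j" by (simp add: t_def power_add)
  qed auto
  then have "q ^ g dvd e (Suc M) * p ^ s (Suc M)" by (simp add: t_def)
  moreover have "coprime (q ^ g) (p ^ s (Suc M))" using \<open>coprime p q\<close> by (simp add: coprime_commute)
  ultimately show ?thesis unfolding g_def using coprime_dvd_mult_left_iff by blast
qed

lemma power_comb_eq_0_small_coeffs_low:
  fixes r :: rat and p q :: int and s :: "nat \<Rightarrow> nat" and e :: "nat \<Rightarrow> int"
  assumes r: "r = of_int p / of_int q" and "p \<noteq> 0" "q \<noteq> 0" "coprime p q" "mono s"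
    and small: "\<And>j. j \<le> M \<Longrightarrow> \<bar>e j\<bar> < p ^ (s (Suc j) - s j)"
    and sum: "(\<Sum>j\<le>M. of_int (e j) * r ^ s j) = 0"
    and "i \<le> M"
  shows "e i = 0"
  using \<open>i \<le> M\<close>
proof (induction i rule: less_induct)
  case (less i)
  then have "p ^ (s (Suc i) - s i) dvd e i"
    by (intro power_comb_eq_0_lowest_coeff_dvd[OF r assms(2-5) _ _ sum]) auto
  with small less.prems show "e i = 0" by (blast intro: zero_if_dvd_abs_less)
qed

lemma power_comb_eq_0_small_coeffs_high:
  fixes r :: rat and p q :: int and s :: "nat \<Rightarrow> nat" and e :: "nat \<Rightarrow> int"
  assumes r: "r = of_int p / of_int q" and "p \<noteq> 0" "q \<noteq> 0" "coprime p q" "mono s"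
    and "\<forall>j\<in>{1..M}. \<bar>e j\<bar> < q ^ (s j - s (j - 1))"
    and "(\<Sum>j\<le>M. of_int (e j) * r ^ s j) = 0"
    and "i \<le> M"
  shows "e i = 0"
  using assms(6-8)
proof (induction M arbitrary: i)
  case 0
  have "r \<noteq> 0" using r \<open>p \<noteq> 0\<close> \<open>q \<noteq> 0\<close> by simp
  with "0.prems"(2) have "e 0 = 0" by simp
  with "0.prems"(3) show ?case by simp
next
  case (Suc M)
  have "q ^ (s (Suc M) - s M) dvd e (Suc M)"
    using power_comb_eq_0_top_coeff_dvd[OF r assms(3-5)] Suc.prems(2) .
  moreover have "\<bar>e (Suc M)\<bar> < q ^ (s (Suc M) - s M)"
    using bspec[OF Suc.prems(1), of "Suc M"] by simp
  ultimately have top: "e (Suc M) = 0"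
    by (rule zero_if_dvd_abs_less)
  show ?case
  proof (cases "i = Suc M")
    case False
    have "\<forall>j\<in>{1..M}. \<bar>e j\<bar> < q ^ (s j - s (j - 1))" using Suc.prems(1) by simp
    moreover have "(\<Sum>j\<le>M. of_int (e j) * r ^ s j) = 0" using Suc.prems(2) top by simp
    moreover have "i \<le> M" using Suc.prems(3) False by simp
    ultimately show ?thesis by (rule Suc.IH)
  qed (simp add: top)
qed

lemma size_le_sum_mset_if_ge_1:
  fixes w :: "'a::linordered_semidom multiset"
  assumes "\<forall>a\<in>#w. 1 \<le> a"
  shows "of_nat (size w) \<le> sum_mset w"
  using assms by (induction w) (auto intro: add_mono)

locale exp_puiseux =
  fixes N :: "nat set" and r :: rat
  assumes numerical_monoid: "numerical_monoid N" and r_gt_1: "r > 1" and r_not_nat: "r \<notin> \<nat>"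
begin

abbreviation "num \<equiv> numer r"
abbreviation "den \<equiv> denom r"
abbreviation "atom i \<equiv> r ^ elem N i"
abbreviation "Z x \<equiv> factorizations (puiseux r N) x"

lemma infinite_N: "infinite N"
proof
  assume "finite N"
  moreover have "finite (UNIV - N)"
    using numerical_monoid by (simp add: numerical_monoid_def)
  ultimately show False
    using finite_Un[of N "UNIV - N"] by simp
qed

lemma strict_mono_elem: "strict_mono (elem N)"
  unfolding elem_def[abs_def] using strict_mono_enumerate[OF infinite_N] .

lemma range_elem: "range (elem N) = N"
  unfolding elem_def[abs_def] using range_enumerate[OF infinite_N] .

lemma gap_pos: "gap N i > 0"
  using strict_mono_elem unfolding gap_def by (simp add: strict_mono_def)

lemma elem_Suc: "elem N (Suc i) = elem N i + gap N i"
proof -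
  have "elem N i < elem N (Suc i)" using strict_mono_elem by (simp add: strict_mono_def)
  then show ?thesis unfolding gap_def by simp
qed

lemma r_eq: "r = of_int num / of_int den"
  unfolding numer_def denom_def by (metis quotient_of_div prod.collapse)

lemma den_pos: "den > 0"
  unfolding denom_def by (rule quotient_of_denom_pos')

lemma coprime_num_den: "coprime num den"
  unfolding numer_def denom_def by (metis quotient_of_coprime prod.collapse)

lemma den_less_num: "den < num"
proof -
  have "(1::rat) < of_int num / of_int den" using r_gt_1 r_eq by simp
  then show ?thesis using den_pos by (simp add: less_divide_eq)
qed

lemma den_ge_2: "den \<ge> 2"
proof (rule ccontr)
  assume "\<not> den \<ge> 2"
  then have "den = 1" using den_pos by simp
  then have "r = of_nat (nat num)" using r_eq den_less_num by simp
  then show False using r_not_nat by (metis of_nat_in_Nats)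
qed

lemma power_mult_den_power: "r ^ k * of_int den ^ k = of_int num ^ k"
proof -
  have "r ^ k = of_int num ^ k / of_int den ^ k" by (metis r_eq power_divide)
  then show ?thesis using den_pos by simp
qed

lemma atom_eq_iff: "atom i = atom j \<longleftrightarrow> i = j"
  using r_gt_1 strict_mono_eq[OF strict_mono_elem] by (simp add: power_inject_exp)

lemma atom_ge_1: "atom i \<ge> 1"
  using r_gt_1 by (simp add: one_le_power)

lemma puiseux_nonneg: "y \<in> puiseux r N \<Longrightarrow> y \<ge> 0"
  by (induction rule: puiseux.induct) (use r_gt_1 in auto)

lemma puiseux_below_power_den_dvd:
  assumes "y \<in> puiseux r N" and "y < r ^ k"
  shows "\<exists>m::int. y * of_int den ^ k = of_int den * of_int m"
  using assms
proof (induction arbitrary: k rule: puiseux.induct)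
  case zero
  then show ?case by auto
next
  case (step y j)
  have "r ^ j > 0" using r_gt_1 by simp
  moreover have "y \<ge> 0" using puiseux_nonneg step.hyps(1) .
  ultimately have "y < r ^ k" "r ^ j < r ^ k" using step.prems by auto
  then obtain m where m: "y * of_int den ^ k = of_int den * of_int m"
    using step.IH by blast
  have "j < k" using \<open>r ^ j < r ^ k\<close> r_gt_1 by (simp add: power_strict_increasing_iff)
  then have "k = j + Suc (k - j - 1)" by simp
  then have "(of_int den :: rat) ^ k = of_int den ^ j * of_int den * of_int den ^ (k - j - 1)"
    by (metis mult.assoc power_Suc power_add)
  then have "r ^ j * of_int den ^ k = r ^ j * of_int den ^ j * of_int den * of_int den ^ (k - j - 1)"
    by (simp add: mult.assoc)
  also have "\<dots> = of_int den * of_int (num ^ j * den ^ (k - j - 1))"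
    by (simp add: power_mult_den_power)
  finally show ?case
    using m by (intro exI[of _ "m + num ^ j * den ^ (k - j - 1)"]) (simp add: algebra_simps)
qed

text \<open>By the previous lemma, a decomposition of \<open>r ^ k\<close> into two nonzero elements would make
  \<open>den\<close> divide \<open>num ^ k\<close>.\<close>

lemma atoms_puiseux: "atoms (puiseux r N) = range atom"
proof
  show "atoms (puiseux r N) \<subseteq> range atom"
  proof
    fix a assume a: "a \<in> atoms (puiseux r N)"
    then have "a \<in> puiseux r N" "a \<noteq> 0" by (auto simp: atoms_def)
    then obtain y k where y: "y \<in> puiseux r N" "k \<in> N" "a = y + r ^ k"
      by (cases rule: puiseux.cases) auto
    have "r ^ k \<in> puiseux r N" using puiseux.step[OF puiseux.zero \<open>k \<in> N\<close>] by simp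
    moreover have "r ^ k \<noteq> 0" using r_gt_1 by simp
    ultimately have "y = 0" using a y by (auto simp: atoms_def)
    moreover obtain i where "k = elem N i" using \<open>k \<in> N\<close> range_elem by blast
    ultimately show "a \<in> range atom" using y by simp
  qed
next
  show "range atom \<subseteq> atoms (puiseux r N)"
  proof
    fix a assume "a \<in> range atom"
    then obtain k where "k \<in> N" and a: "a = r ^ k" using range_elem by auto
    have "b = 0 \<or> c = 0"
      if b: "b \<in> puiseux r N" and c: "c \<in> puiseux r N" and bc: "r ^ k = b + c" for b c
    proof (rule ccontr)
      assume "\<not> (b = 0 \<or> c = 0)"
      with bc have "b < r ^ k" "c < r ^ k"
        using puiseux_nonneg[OF b] puiseux_nonneg[OF c] by auto
      then obtain m1 m2 where "b * of_int den ^ k = of_int den * of_int m1"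
        and "c * of_int den ^ k = of_int den * of_int m2"
        using puiseux_below_power_den_dvd b c by blast
      then have "(of_int (num ^ k) :: rat) = of_int (den * (m1 + m2))"
        using power_mult_den_power[of k] bc by (simp add: algebra_simps)
      then have "den dvd num ^ k" by (simp only: of_int_eq_iff) simp
      moreover have "coprime den (num ^ k)" using coprime_num_den by (simp add: coprime_commute)
      ultimately have "is_unit den" using coprime_absorb_left by blast
      then show False using den_ge_2 by simp
    qed
    moreover have "r ^ k \<in> puiseux r N" using puiseux.step[OF puiseux.zero \<open>k \<in> N\<close>] by simp
    moreover have "r ^ k \<noteq> 0" using r_gt_1 by simp
    ultimately show "a \<in> atoms (puiseux r N)" unfolding a atoms_def by blast
  qed
qed

lemma factorizations_iff: "w \<in> Z x \<longleftrightarrow> set_mset w \<subseteq> range atom \<and> sum_mset w = x"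
  by (simp add: factorizations_def atoms_puiseux)

lemma count_sum_replicate_atoms:
  "count (\<Sum>j\<le>M. replicate_mset (c j) (atom j)) (atom i) = (if i \<le> M then c i else 0)"
proof -
  have "count (\<Sum>j\<le>M. replicate_mset (c j) (atom j)) (atom i) = (\<Sum>j\<le>M. if j = i then c j else 0)"
    unfolding count_sum by (rule sum.cong) (auto simp: atom_eq_iff)
  also have "\<dots> = (if i \<le> M then c i else 0)" by (simp add: sum.delta)
  finally show ?thesis .
qed

lemma sum_mset_sum_replicate_atoms:
  "sum_mset (\<Sum>j\<le>M. replicate_mset (c j) (atom j)) = (\<Sum>j\<le>M. of_nat (c j) * atom j)"
  by (induction M) (simp_all add: atMost_Suc)

lemma multiset_eq_sum_replicate_atoms:
  assumes "set_mset w \<subseteq> atom ` {..M}"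
  shows "w = (\<Sum>j\<le>M. replicate_mset (count w (atom j)) (atom j))"
proof (rule multiset_eqI)
  fix a
  show "count w a = count (\<Sum>j\<le>M. replicate_mset (count w (atom j)) (atom j)) a"
  proof (cases "a \<in> atom ` {..M}")
    case True
    then show ?thesis by (auto simp: count_sum_replicate_atoms)
  next
    case False
    with assms have "count w a = 0" by (auto simp: count_eq_zero_iff)
    with False show ?thesis by (auto simp: count_sum intro!: sum.neutral)
  qed
qed

lemma factorization_atoms_atMost:
  assumes "w \<in> Z x"
  obtains M where "\<And>M'. M \<le> M' \<Longrightarrow> set_mset w \<subseteq> atom ` {..M'}"
proof -
  obtain I where "finite I" "set_mset w = atom ` I"
    using assms finite_subset_image[of "set_mset w" atom UNIV] by (auto simp: factorizations_iff)
  have "set_mset w \<subseteq> atom ` {..M'}" if "Max I \<le> M'" for M'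
  proof -
    have "I \<subseteq> {..M'}" using Max_ge[OF \<open>finite I\<close>] that by fastforce
    then show ?thesis unfolding \<open>set_mset w = atom ` I\<close> by (rule image_mono)
  qed
  then show ?thesis using that by blast
qed

lemma factorization_eq_if_counts_eq:
  assumes "w1 \<in> Z x" "w2 \<in> Z x" "\<And>i. count w1 (atom i) = count w2 (atom i)"
  shows "w1 = w2"
proof (rule multiset_eqI)
  fix a
  show "count w1 a = count w2 a"
  proof (cases "a \<in> range atom")
    case False
    with assms(1,2) have "a \<notin># w1" "a \<notin># w2" by (auto simp: factorizations_iff)
    then show ?thesis by (simp add: not_in_iff)
  qed (use assms(3) in auto)
qed

lemma factorizations_count_diff_comb_eq_0:
  assumes "w1 \<in> Z x" "w2 \<in> Z x" "set_mset w1 \<subseteq> atom ` {..M}" "set_mset w2 \<subseteq> atom ` {..M}"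
  shows "(\<Sum>j\<le>M. of_int (int (count w1 (atom j)) - int (count w2 (atom j))) * r ^ elem N j) = 0"
proof -
  have "sum_mset w = (\<Sum>j\<le>M. of_nat (count w (atom j)) * atom j)"
    if "set_mset w \<subseteq> atom ` {..M}" for w
    by (subst multiset_eq_sum_replicate_atoms[OF that]) (simp add: sum_mset_sum_replicate_atoms)
  moreover have "sum_mset w1 = sum_mset w2" using assms(1,2) by (simp add: factorizations_iff)
  ultimately show ?thesis
    using assms(3,4) by (simp add: sum_subtractf algebra_simps)
qed

definition min_normal :: "rat multiset \<Rightarrow> bool" where
  "min_normal w \<longleftrightarrow> (\<forall>i. int (count w (atom i)) < num ^ gap N i)"

definition max_normal :: "rat multiset \<Rightarrow> bool" where
  "max_normal w \<longleftrightarrow> (\<forall>i\<ge>1. int (count w (atom i)) < den ^ gap N (i - 1))"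

lemma factorizations_common_bound:
  assumes "w1 \<in> Z x" "w2 \<in> Z x"
  obtains M where "i \<le> M" "set_mset w1 \<subseteq> atom ` {..M}" "set_mset w2 \<subseteq> atom ` {..M}"
proof -
  obtain M1 M2 where "\<And>M. M1 \<le> M \<Longrightarrow> set_mset w1 \<subseteq> atom ` {..M}"
    and "\<And>M. M2 \<le> M \<Longrightarrow> set_mset w2 \<subseteq> atom ` {..M}"
    using factorization_atoms_atMost assms by metis
  then show ?thesis using that[of "max i (max M1 M2)"] by simp
qed

lemma min_normal_factorization_unique:
  assumes "w1 \<in> Z x" "w2 \<in> Z x" "min_normal w1" "min_normal w2"
  shows "w1 = w2"
proof (rule factorization_eq_if_counts_eq[OF assms(1,2)])
  fix i
  obtain M where "i \<le> M" and M: "set_mset w1 \<subseteq> atom ` {..M}" "set_mset w2 \<subseteq> atom ` {..M}"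
    using factorizations_common_bound assms(1,2) .
  define e where "e j = int (count w1 (atom j)) - int (count w2 (atom j))" for j
  have "e i = 0"
  proof (rule power_comb_eq_0_small_coeffs_low[OF r_eq _ _ coprime_num_den])
    fix j
    have "int (count w1 (atom j)) < num ^ gap N j" "int (count w2 (atom j)) < num ^ gap N j"
      using assms(3,4) unfolding min_normal_def by blast+
    then show "\<bar>e j\<bar> < num ^ (elem N (Suc j) - elem N j)"
      unfolding e_def gap_def by linarith
    show "(\<Sum>j\<le>M. of_int (e j) * r ^ elem N j) = 0"
      unfolding e_def using factorizations_count_diff_comb_eq_0[OF assms(1,2) M] .
  qed (use \<open>i \<le> M\<close> den_less_num den_pos strict_mono_mono[OF strict_mono_elem] in auto)
  then show "count w1 (atom i) = count w2 (atom i)" by (simp add: e_def)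
qed

lemma max_normal_factorization_unique:
  assumes "w1 \<in> Z x" "w2 \<in> Z x" "max_normal w1" "max_normal w2"
  shows "w1 = w2"
proof (rule factorization_eq_if_counts_eq[OF assms(1,2)])
  fix i
  obtain M where "i \<le> M" and M: "set_mset w1 \<subseteq> atom ` {..M}" "set_mset w2 \<subseteq> atom ` {..M}"
    using factorizations_common_bound assms(1,2) .
  define e where "e j = int (count w1 (atom j)) - int (count w2 (atom j))" for j
  have "e i = 0"
  proof (rule power_comb_eq_0_small_coeffs_high[OF r_eq _ _ coprime_num_den])
    have "\<bar>e j\<bar> < den ^ (elem N j - elem N (j - 1))" if "1 \<le> j" for j
    proof -
      have gap: "gap N (j - 1) = elem N j - elem N (j - 1)"
        using that by (simp add: gap_def)
      have "int (count w1 (atom j)) < den ^ (elem N j - elem N (j - 1))"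
        "int (count w2 (atom j)) < den ^ (elem N j - elem N (j - 1))"
        using assms(3,4) that unfolding max_normal_def gap[symmetric] by blast+
      then show ?thesis unfolding e_def by linarith
    qed
    then show "\<forall>j\<in>{1..M}. \<bar>e j\<bar> < den ^ (elem N j - elem N (j - 1))" by simp
    show "(\<Sum>j\<le>M. of_int (e j) * r ^ elem N j) = 0"
      unfolding e_def using factorizations_count_diff_comb_eq_0[OF assms(1,2) M] .
  qed (use \<open>i \<le> M\<close> den_less_num den_pos strict_mono_mono[OF strict_mono_elem] in auto)
  then show "count w1 (atom i) = count w2 (atom i)" by (simp add: e_def)
qed

lemma factorization_exchange:
  assumes "w \<in> Z x" "k \<le> count w (atom i)" "of_nat k * atom i = of_nat l * atom j"
  shows "\<exists>w'\<in>Z x. size w' + k = size w + l"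
proof -
  define A where "A = replicate_mset k (atom i)"
  define w' where "w' = w - A + replicate_mset l (atom j)"
  have "A \<subseteq># w" unfolding A_def using assms(2) by (simp add: count_le_replicate_mset_subset_eq)
  then have w: "w = (w - A) + A" by simp
  then have "sum_mset w = sum_mset (w - A) + of_nat k * atom i"
    by (metis sum_mset.union sum_mset_replicate_mset A_def)
  with assms(1,3) have "sum_mset w' = x" by (simp add: w'_def factorizations_iff)
  moreover have "set_mset w' \<subseteq> range atom"
    using assms(1) by (auto simp: w'_def factorizations_iff dest: in_diffD)
  moreover have "size w = size (w - A) + k"
    using w by (metis size_union size_replicate_mset A_def)
  ultimately show ?thesis
    by (intro bexI[of _ w']) (simp_all add: w'_def factorizations_iff)
qed

lemma num_power_gap_atom: "of_int (num ^ gap N i) * atom i = of_int (den ^ gap N i) * atom (Suc i)"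
  by (simp add: elem_Suc power_add flip: power_mult_den_power)

lemma shorter_factorization_if_not_min_normal:
  assumes "w \<in> Z x" "\<not> min_normal w"
  shows "\<exists>w'\<in>Z x. size w' < size w"
proof -
  obtain i where i: "num ^ gap N i \<le> int (count w (atom i))"
    using assms(2) unfolding min_normal_def by (auto simp: not_less)
  define k where "k = nat (num ^ gap N i)"
  define l where "l = nat (den ^ gap N i)"
  have "k \<le> count w (atom i)" using i by (simp add: k_def nat_le_iff)
  moreover have "of_nat k * atom i = of_nat l * atom (Suc i)"
    using num_power_gap_atom den_pos den_less_num by (simp add: k_def l_def)
  ultimately obtain w' where "w' \<in> Z x" "size w' + k = size w + l"
    using factorization_exchange[OF assms(1)] by blast
  moreover have "l < k"
    using den_less_num den_pos gap_pos by (simp add: k_def l_def power_strict_mono)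
  ultimately have "size w' < size w" by linarith
  with \<open>w' \<in> Z x\<close> show ?thesis by blast
qed

lemma longer_factorization_if_not_max_normal:
  assumes "w \<in> Z x" "\<not> max_normal w"
  shows "\<exists>w'\<in>Z x. size w < size w'"
proof -
  obtain i where i: "den ^ gap N i \<le> int (count w (atom (Suc i)))"
    using assms(2) unfolding max_normal_def by (auto simp: not_less Suc_le_eq dest!: gr0_implies_Suc)
  define k where "k = nat (den ^ gap N i)"
  define l where "l = nat (num ^ gap N i)"
  have "k \<le> count w (atom (Suc i))" using i by (simp add: k_def nat_le_iff)
  moreover have "of_nat k * atom (Suc i) = of_nat l * atom i"
    using num_power_gap_atom den_pos den_less_num by (simp add: k_def l_def)
  ultimately obtain w' where "w' \<in> Z x" "size w' + k = size w + l"
    using factorization_exchange[OF assms(1)] by blast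
  moreover have "k < l"
    using den_less_num den_pos gap_pos by (simp add: k_def l_def power_strict_mono)
  ultimately have "size w < size w'" by linarith
  with \<open>w' \<in> Z x\<close> show ?thesis by blast
qed

lemma size_factorization_le:
  assumes "w \<in> Z x"
  shows "size w \<le> nat \<lfloor>x\<rfloor>"
proof -
  have "\<forall>a\<in>#w. 1 \<le> a" "sum_mset w = x"
    using assms atom_ge_1 by (auto simp: factorizations_iff)
  then have "of_nat (size w) \<le> x" using size_le_sum_mset_if_ge_1 by metis
  then have "int (size w) \<le> \<lfloor>x\<rfloor>" by (simp add: le_floor_iff)
  then show ?thesis by linarith
qed

lemma ex_min_length_factorization: "z \<in> Z x \<Longrightarrow> \<exists>w\<in>Z x. \<forall>w'\<in>Z x. size w \<le> size w'"
  using ex_has_least_nat[of "\<lambda>w. w \<in> Z x" z size] by blast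

lemma ex_max_length_factorization:
  assumes "z \<in> Z x"
  shows "\<exists>w\<in>Z x. \<forall>w'\<in>Z x. size w' \<le> size w"
proof -
  have "\<forall>w. w \<in> Z x \<longrightarrow> size w < Suc (nat \<lfloor>x\<rfloor>)"
    using size_factorization_le by (simp add: le_imp_less_Suc)
  then show ?thesis
    using ex_has_greatest_nat[of "\<lambda>w. w \<in> Z x" z size] assms by blast
qed

lemma min_length_iff_min_normal:
  assumes "z \<in> Z x"
  shows "(\<forall>w\<in>Z x. size z \<le> size w) \<longleftrightarrow> min_normal z"
proof
  assume "\<forall>w\<in>Z x. size z \<le> size w"
  then show "min_normal z"
    using shorter_factorization_if_not_min_normal[OF assms] leD by blast
next
  assume "min_normal z"
  obtain w where w: "w \<in> Z x" "\<forall>w'\<in>Z x. size w \<le> size w'"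
    using ex_min_length_factorization[OF assms] by blast
  then have "min_normal w"
    using shorter_factorization_if_not_min_normal leD by blast
  with w(1) \<open>min_normal z\<close> assms have "z = w"
    using min_normal_factorization_unique by blast
  with w(2) show "\<forall>w\<in>Z x. size z \<le> size w" by blast
qed

lemma max_length_iff_max_normal:
  assumes "z \<in> Z x"
  shows "(\<forall>w\<in>Z x. size w \<le> size z) \<longleftrightarrow> max_normal z"
proof
  assume "\<forall>w\<in>Z x. size w \<le> size z"
  then show "max_normal z"
    using longer_factorization_if_not_max_normal[OF assms] leD by blast
next
  assume "max_normal z"
  obtain w where w: "w \<in> Z x" "\<forall>w'\<in>Z x. size w' \<le> size w"
    using ex_max_length_factorization[OF assms] by blast
  then have "max_normal w"
    using longer_factorization_if_not_max_normal leD by blast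
  with w(1) \<open>max_normal z\<close> assms have "z = w"
    using max_normal_factorization_unique by blast
  with w(2) show "\<forall>w\<in>Z x. size w \<le> size z" by blast
qed

lemma ex1_min_length_factorization:
  assumes "z \<in> Z x"
  shows "\<exists>!w. w \<in> Z x \<and> (\<forall>w'\<in>Z x. size w \<le> size w')"
proof -
  obtain w where w: "w \<in> Z x" "\<forall>w'\<in>Z x. size w \<le> size w'"
    using ex_min_length_factorization[OF assms] by blast
  have "v = w" if "v \<in> Z x" "\<forall>w'\<in>Z x. size v \<le> size w'" for v
    using that w min_length_iff_min_normal min_normal_factorization_unique by blast
  with w show ?thesis by blast
qed

lemma ex1_max_length_factorization:
  assumes "z \<in> Z x"
  shows "\<exists>!w. w \<in> Z x \<and> (\<forall>w'\<in>Z x. size w' \<le> size w)"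
proof -
  obtain w where w: "w \<in> Z x" "\<forall>w'\<in>Z x. size w' \<le> size w"
    using ex_max_length_factorization[OF assms] by blast
  have "v = w" if "v \<in> Z x" "\<forall>w'\<in>Z x. size w' \<le> size v" for v
    using that w max_length_iff_max_normal max_normal_factorization_unique by blast
  with w show ?thesis by blast
qed

lemma factorizations_eq_singleton:
  assumes "z \<in> Z x" "min_normal z" "max_normal z"
  shows "Z x = {z}"
proof -
  have "w = z" if "w \<in> Z x" for w
  proof -
    have z_min: "\<forall>w'\<in>Z x. size z \<le> size w'"
      using min_length_iff_min_normal[OF assms(1)] assms(2) by blast
    moreover have "size w \<le> size z"
      using max_length_iff_max_normal[OF assms(1)] assms(3) that by blast
    ultimately have "\<forall>w'\<in>Z x. size w \<le> size w'"
      using that by (metis le_antisym)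
    then have "min_normal w" using that min_length_iff_min_normal by blast
    then show "w = z" using that assms(1,2) min_normal_factorization_unique by blast
  qed
  with assms(1) show ?thesis by blast
qed

lemma count_fact_of: "count (fact_of r N n c) (atom i) = (if i \<le> n then c i else 0)"
  unfolding fact_of_def by (rule count_sum_replicate_atoms)

lemma min_normal_fact_of_iff: "min_normal (fact_of r N n c) \<longleftrightarrow> (\<forall>i\<le>n. int (c i) < num ^ gap N i)"
  unfolding min_normal_def count_fact_of using den_pos den_less_num by auto

lemma max_normal_fact_of_iff:
  "max_normal (fact_of r N n c) \<longleftrightarrow> (\<forall>i\<in>{1..n}. int (c i) < den ^ gap N (i - 1))"
  unfolding max_normal_def count_fact_of using den_pos by auto

lemma min_max_normal_fact_of_if_less_den:
  assumes "\<forall>i\<le>n. int (c i) < den"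
  shows "min_normal (fact_of r N n c)" and "max_normal (fact_of r N n c)"
proof -
  have "int (c i) < num ^ gap N j" "int (c i) < den ^ gap N j" if "i \<le> n" for i j
  proof -
    have "int (c i) < den" using assms that by blast
    moreover have "den \<le> den ^ gap N j" using den_pos gap_pos[of j] by (simp add: self_le_power)
    moreover have "den \<le> num ^ gap N j"
      using den_pos den_less_num gap_pos[of j] self_le_power[of num "gap N j"] by simp
    ultimately show "int (c i) < num ^ gap N j" "int (c i) < den ^ gap N j" by simp_all
  qed
  then show "min_normal (fact_of r N n c)" "max_normal (fact_of r N n c)"
    unfolding min_normal_fact_of_iff max_normal_fact_of_iff by simp_all
qed

end

theorem mainTheorem1:
  fixes N :: "nat set" and r x :: rat and n :: nat and c :: "nat \<Rightarrow> nat"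
  assumes "numerical_monoid N"
    and "r > 1" and "r \<notin> \<nat>"
    and "atomic (puiseux r N)"
    and "x \<in> puiseux r N" and "x \<noteq> 0"
    and "fact_of r N n c \<in> factorizations (puiseux r N) x"
  shows
   "((size (fact_of r N n c) \<in> lengths (puiseux r N) x \<and>
       (\<forall>l\<in>lengths (puiseux r N) x. size (fact_of r N n c) \<le> l))
      \<longleftrightarrow> (\<forall>i\<le>n. int (c i) < numer r ^ gap N i))
    \<and> (\<exists>!w. w \<in> factorizations (puiseux r N) x \<and>
           (\<forall>w'\<in>factorizations (puiseux r N) x. size w \<le> size w'))
    \<and> ((size (fact_of r N n c) \<in> lengths (puiseux r N) x \<and>
       (\<forall>l\<in>lengths (puiseux r N) x. l \<le> size (fact_of r N n c)))
      \<longleftrightarrow> (\<forall>i\<in>{1..n}. int (c i) < denom r ^ gap N (i - 1)))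
    \<and> (\<exists>!w. w \<in> factorizations (puiseux r N) x \<and>
           (\<forall>w'\<in>factorizations (puiseux r N) x. size w' \<le> size w))
    \<and> ((\<forall>i\<le>n. int (c i) < denom r) \<longrightarrow> card (factorizations (puiseux r N) x) = 1)"
proof -
  interpret exp_puiseux N r
    using assms(1-3) by unfold_locales
  define z where "z = fact_of r N n c"
  have z: "z \<in> Z x" using assms(7) by (simp add: z_def)
  have lengths: "lengths (puiseux r N) x = size ` Z x" by (simp add: lengths_def)
  have "(size z \<in> size ` Z x \<and> (\<forall>l\<in>size ` Z x. size z \<le> l)) \<longleftrightarrow> min_normal z"
    using z min_length_iff_min_normal[OF z] by auto
  moreover have "(size z \<in> size ` Z x \<and> (\<forall>l\<in>size ` Z x. l \<le> size z)) \<longleftrightarrow> max_normal z"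
    using z max_length_iff_max_normal[OF z] by auto
  moreover have "(\<forall>i\<le>n. int (c i) < denom r) \<longrightarrow> card (Z x) = 1"
    using factorizations_eq_singleton[OF z] min_max_normal_fact_of_if_less_den by (simp add: z_def)
  ultimately show ?thesis
    unfolding lengths z_def[symmetric]
    using ex1_min_length_factorization[OF z] ex1_max_length_factorization[OF z]
    by (simp add: z_def min_normal_fact_of_iff max_normal_fact_of_iff)
qed

end
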